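(* For the log-loss $\ell_{\log}(\mathrm{h},(x,y))=-\log\mathrm{h}(y|x)$ and training instances $x_1,\dots,x_n$, the problem $\mathscr{P}_{x,\ell_{\log}}^{\mathbf{a},\mathbf{b}}$ is equivalent to $$\mathscr{P}_{x,\log}^{\mathbf{a},\mathbf{b}}:\ \min_{\boldsymbol{\mu},\boldsymbol{\eta}}\ \tfrac{1}{2}(\mathbf{b}-\mathbf{a})^{\mathrm{T}}\boldsymbol{\eta}-\tfrac{1}{2}(\mathbf{b}+\mathbf{a})^{\mathrm{T}}\boldsymbol{\mu}-\frac{1}{n}\sum_{i=1}^n\varphi_{\log}(\boldsymbol{\mu},x_i)\ \text{ s.t. }\boldsymbol{\eta}+\boldsymbol{\mu}\succeq\mathbf{0},\ \boldsymbol{\eta}-\boldsymbol{\mu}\succeq\mathbf{0},$$ with $\varphi_{\log}(\boldsymbol{\mu},x)=-\log\sum_{y\in\mathcal{Y}}\exp\{\Phi(x,y)^{\mathrm{T}}\boldsymbol{\mu}\}$. In addition, for a solution $\boldsymbol{\mu}^*,\boldsymbol{\eta}^*$ of $\mathscr{P}_{x,\log}^{\mathbf{a},\mathbf{b}}$, the condition $\ell_{\log}(\mathrm{h},(x,y))+\Phi(x,y)^{\mathrm{T}}\boldsymbol{\mu}^*+\varphi_{\ell_{\log}}(\boldsymbol{\mu}^*,x)\leq0$ for all $x,y$ (which makes $\mathrm{h}$ a log-MRC for $\mathcal{U}_x^{\mathbf{a},\mathbf{b}}$) becomes $$\mathrm{h}(y|x)=\exp\{\Phi(x,y)^{\mathrm{T}}\boldsymbol{\mu}^*+\varphi_{\log}(\boldsymbol{\mu}^*,x)\}=\Big(\sum_{i\in\mathcal{Y}}\exp\{(\Phi(x,i)-\Phi(x,y))^{\mathrm{T}}\boldsymbol{\mu}^*\}\Big)^{-1}\quad\forall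 x,y.$$
   Context: Let $\mathcal{X},\mathcal{Y}$ be finite nonempty sets, $\mathcal{Y}=\{1,\dots,|\mathcal{Y}|\}$; $\Delta(\mathcal{Z})$ the probability distributions on a finite set $\mathcal{Z}$. A classification rule $\mathrm{h}$ assigns to each $x$ a distribution $\mathrm{h}(\cdot|x)\in\Delta(\mathcal{Y})$. For a score function $L$ (loss $\ell(\mathrm{h},(x,y))=L(\mathrm{h}(\cdot|x),y)$): $\Phi:\mathcal{X}\times\mathcal{Y}\to\mathbb{R}^m$ is a feature mapping, $\boldsymbol{\Phi}(x,\cdot)$ the $|\mathcal{Y}|\times m$ matrix with rows $\Phi(x,y)^{\mathrm{T}}$, $\mathbf{1}$ the all-ones vector, $\preceq,\succeq$ componentwise, $\mathcal{L}=\{\mathbf{c}\in\mathbb{R}^{|\mathcal{Y}|}:\exists\,\mathrm{q}\in\Delta(\mathcal{Y}),\ \mathbf{c}+(L(\mathrm{q},y))_{y}\preceq\mathbf{0}\}$, $\varphi_\ell(\boldsymbol{\mu},x)=\max\{\nu:\boldsymbol{\Phi}(x,\cdot)\boldsymbol{\mu}+\nu\mathbf{1}\in\mathcal{L}\}$, and $\mathscr{P}_{x,\ell}^{\mathbf{a},\mathbf{b}}$ is $\min_{\boldsymbol{\mu},\boldsymbol{\eta}}\tfrac12(\mathbf{b}-\mathbf{a})^{\mathrm{T}}\boldsymbol{\eta}-\tfrac12(\mathbf{b}+\mathbf{a})^{\mathrm{T}}\boldsymbol{\mu}-\frac1n\sum_{i=1}^n\varphi_\ell(\boldsymbol{\mu},x_i)$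 s.t. $\boldsymbol{\eta}\pm\boldsymbol{\mu}\succeq\mathbf{0}$. With $\mathrm{p}_n$ the empirical distribution of $x_1,\dots,x_n$, $\mathcal{U}_x^{\mathbf{a},\mathbf{b}}=\{\mathrm{p}\in\Delta(\mathcal{X}\times\mathcal{Y}):\mathbf{a}\preceq\mathbb{E}_{\mathrm{p}}\{\Phi\}\preceq\mathbf{b},\ \sum_y\mathrm{p}(x,y)=\mathrm{p}_n(x)\ \forall x\}$, and an $\ell$-MRC for $\mathcal{U}$ minimizes $\max_{\mathrm{p}\in\mathcal{U}}\sum_{x,y}\mathrm{p}(x,y)\ell(\mathrm{h},(x,y))$ over all classification rules. *)

theory Defs
  imports "HOL-Analysis.Analysis"
begin

text \<open>A score function is L :: ('y => real) => 'y => ereal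
  (extended real, since log-loss can be +infinity).\<close>

definition prob_dist :: "('y::finite \<Rightarrow> real) \<Rightarrow> bool" where
  "prob_dist q \<longleftrightarrow> (\<forall>y. 0 \<le> q y) \<and> (\<Sum>y\<in>UNIV. q y) = 1"

definition class_rule :: "('x \<Rightarrow> 'y::finite \<Rightarrow> real) \<Rightarrow> bool" where
  "class_rule h \<longleftrightarrow> (\<forall>x. prob_dist (h x))"

definition L_log :: "('y \<Rightarrow> real) \<Rightarrow> 'y \<Rightarrow> ereal" where
  "L_log q y = (if q y = 0 then \<infinity> else ereal (- ln (q y)))"

definition loss_of :: "(('y \<Rightarrow> real) \<Rightarrow> 'y \<Rightarrow> ereal) \<Rightarrow> ('x \<Rightarrow> 'y \<Rightarrow> real) \<Rightarrow> 'x \<Rightarrow> 'y \<Rightarrow> ereal" where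
  "loss_of L h x y = L (h x) y"

definition calL :: "(('y::finite \<Rightarrow> real) \<Rightarrow> 'y \<Rightarrow> ereal) \<Rightarrow> ('y \<Rightarrow> real) set" where
  "calL L = {c. \<exists>q. prob_dist q \<and> (\<forall>y. ereal (c y) + L q y \<le> 0)}"

definition phi_ell :: "(('y::finite \<Rightarrow> real) \<Rightarrow> 'y \<Rightarrow> ereal) \<Rightarrow> ('x \<Rightarrow> 'y \<Rightarrow> real^'m)
     \<Rightarrow> real^'m \<Rightarrow> 'x \<Rightarrow> real" where
  "phi_ell L Phi \<mu> x = (GREATEST \<nu>::real. (\<lambda>y. Phi x y \<bullet> \<mu> + \<nu>) \<in> calL L)"

definition phi_log :: "('x \<Rightarrow> 'y::finite \<Rightarrow> real^'m) \<Rightarrow> real^'m \<Rightarrow> 'x \<Rightarrow> real" where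
  "phi_log Phi \<mu> x = - ln (\<Sum>y\<in>UNIV. exp (Phi x y \<bullet> \<mu>))"

definition mrc_obj :: "(real^'m \<Rightarrow> 'x \<Rightarrow> real) \<Rightarrow> real^'m \<Rightarrow> real^'m \<Rightarrow> 'x list
     \<Rightarrow> real^'m \<Rightarrow> real^'m \<Rightarrow> real" where
  "mrc_obj phi a b xs \<mu> \<eta> =
     (1/2) * ((b - a) \<bullet> \<eta>) - (1/2) * ((b + a) \<bullet> \<mu>)
     - (1 / real (length xs)) * (\<Sum>i<length xs. phi \<mu> (xs ! i))"

definition mrc_feasible :: "real^'m \<Rightarrow> real^'m \<Rightarrow> bool" where
  "mrc_feasible \<mu> \<eta> \<longleftrightarrow> (\<forall>i. 0 \<le> \<eta> $ i + \<mu> $ i \<and> 0 \<le> \<eta> $ i - \<mu> $ i)"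

definition obj_ell :: "(('y::finite \<Rightarrow> real) \<Rightarrow> 'y \<Rightarrow> ereal) \<Rightarrow> ('x \<Rightarrow> 'y \<Rightarrow> real^'m)
     \<Rightarrow> real^'m \<Rightarrow> real^'m \<Rightarrow> 'x list \<Rightarrow> real^'m \<Rightarrow> real^'m \<Rightarrow> real" where
  "obj_ell L Phi a b xs \<mu> \<eta> = mrc_obj (phi_ell L Phi) a b xs \<mu> \<eta>"

definition obj_log :: "('x \<Rightarrow> 'y::finite \<Rightarrow> real^'m)
     \<Rightarrow> real^'m \<Rightarrow> real^'m \<Rightarrow> 'x list \<Rightarrow> real^'m \<Rightarrow> real^'m \<Rightarrow> real" where
  "obj_log Phi a b xs \<mu> \<eta> = mrc_obj (phi_log Phi) a b xs \<mu> \<eta>"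

definition solves_log :: "('x \<Rightarrow> 'y::finite \<Rightarrow> real^'m)
     \<Rightarrow> real^'m \<Rightarrow> real^'m \<Rightarrow> 'x list \<Rightarrow> real^'m \<Rightarrow> real^'m \<Rightarrow> bool" where
  "solves_log Phi a b xs \<mu> \<eta> \<longleftrightarrow> mrc_feasible \<mu> \<eta> \<and>
     (\<forall>\<mu>' \<eta>'. mrc_feasible \<mu>' \<eta>' \<longrightarrow> obj_log Phi a b xs \<mu> \<eta> \<le> obj_log Phi a b xs \<mu>' \<eta>')"

end

theory Submission
  imports Defs
begin

text \<open>For the log score, \<open>c + L(q,\<cdot>) \<le> 0\<close> just says \<open>exp c \<le> q\<close> pointwise, so \<open>c \<in> calL\<close>
  iff \<open>\<Sum>\<^sub>y exp (c y) \<le> 1\<close>. Shifting \<open>c = \<Phi>(x,\<cdot>)\<^sup>T\<mu> + \<nu>\<close> multiplies that sum by \<open>exp \<nu>\<close>,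
  so the greatest admissible \<open>\<nu>\<close> is \<open>-log \<Sum>\<^sub>y exp (\<Phi>(x,y)\<^sup>T\<mu>)\<close>, which is \<open>\<phi>\<^sub>l\<^sub>o\<^sub>g\<close>.
  With this \<open>\<nu>\<close> the scores satisfy \<open>\<Sum>\<^sub>y exp (c y) = 1\<close>, and a distribution dominating
  \<open>exp c\<close> pointwise must equal it: \<open>h\<close> is the softmax of the scores. This holds for every
  \<open>\<mu>\<close>.\<close>

lemma L_log_le_neg_iff:
  assumes "0 \<le> q y"
  shows "ereal c + L_log q y \<le> 0 \<longleftrightarrow> exp c \<le> q y"
proof (cases "q y = 0")
  case False
  with assms have "0 < q y" by simp
  then show ?thesis
    by (simp add: L_log_def ln_ge_iff[symmetric])
qed (simp add: L_log_def)

lemma sum_exp_pos: "0 < (\<Sum>y\<in>UNIV. exp (v (y::'y::finite) :: real))"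
  by (intro sum_pos) auto

lemma prob_dist_nonneg: "prob_dist q \<Longrightarrow> 0 \<le> q y"
  by (simp add: prob_dist_def)

lemma calL_L_log: "calL L_log = {c. (\<Sum>y\<in>UNIV. exp (c y)) \<le> 1}"
proof (intro set_eqI iffI; simp)
  fix c :: "'y::finite \<Rightarrow> real"
  assume "c \<in> calL L_log"
  then obtain q where q: "prob_dist q" and le: "\<And>y. ereal (c y) + L_log q y \<le> 0"
    unfolding calL_def by blast
  have "(\<Sum>y\<in>UNIV. exp (c y)) \<le> (\<Sum>y\<in>UNIV. q y)"
    using le q by (intro sum_mono) (simp add: L_log_le_neg_iff prob_dist_nonneg)
  with q show "(\<Sum>y\<in>UNIV. exp (c y)) \<le> 1"
    by (simp add: prob_dist_def)
next
  fix c :: "'y::finite \<Rightarrow> real"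
  define S where "S = (\<Sum>y\<in>UNIV. exp (c y))"
  assume "S \<le> 1"
  have "0 < S"
    unfolding S_def by (rule sum_exp_pos)
  define q where "q y = exp (c y) / S" for y
  have q: "prob_dist q"
    using \<open>0 < S\<close> by (simp add: prob_dist_def q_def sum_divide_distrib[symmetric] S_def)
  have "exp (c y) \<le> q y" for y
    using \<open>0 < S\<close> \<open>S \<le> 1\<close> by (simp add: q_def le_divide_eq mult_left_le)
  with q have "ereal (c y) + L_log q y \<le> 0" for y
    by (simp add: L_log_le_neg_iff prob_dist_nonneg)
  with q show "c \<in> calL L_log"
    unfolding calL_def by blast
qed

lemma shift_in_calL_L_log_iff:
  fixes v :: "'y::finite \<Rightarrow> real"
  shows "(\<lambda>y. v y + \<nu>) \<in> calL L_log \<longleftrightarrow> \<nu> \<le> - ln (\<Sum>y\<in>UNIV. exp (v y))"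
proof -
  have "(\<Sum>y\<in>UNIV. exp (v y + \<nu>)) = exp \<nu> * (\<Sum>y\<in>UNIV. exp (v y))"
    by (simp add: exp_add sum_distrib_left mult.commute)
  with sum_exp_pos[of v] show ?thesis
    by (auto simp: calL_L_log ln_le_zero_iff[symmetric] ln_mult)
qed

lemma phi_ell_L_log: "phi_ell L_log Phi = phi_log Phi"
  unfolding phi_ell_def phi_log_def shift_in_calL_L_log_iff
  by (intro ext Greatest_equality) auto

lemma obj_ell_L_log: "obj_ell L_log Phi a b xs = obj_log Phi a b xs"
  by (simp add: fun_eq_iff obj_ell_def obj_log_def phi_ell_L_log)

lemma sum_exp_normalized:
  fixes v :: "'y::finite \<Rightarrow> real"
  shows "(\<Sum>y\<in>UNIV. exp (v y - ln (\<Sum>y\<in>UNIV. exp (v y)))) = 1"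
  using sum_exp_pos[of v] by (simp add: exp_diff sum_divide_distrib[symmetric])

lemma exp_normalized_eq_inverse:
  fixes v :: "'y::finite \<Rightarrow> real"
  shows "exp (v y - ln (\<Sum>y\<in>UNIV. exp (v y))) = inverse (\<Sum>i\<in>UNIV. exp (v i - v y))"
  using sum_exp_pos[of v] by (simp add: exp_diff sum_divide_distrib[symmetric])

lemma prob_dist_eq_if_dominates:
  assumes "prob_dist q" and "(\<Sum>y\<in>UNIV. p y) = 1" and "\<And>y. p y \<le> q y"
  shows "q = p"
proof
  fix y
  from assms show "q y = p y"
    using sum_mono_inv[of p UNIV q y] by (simp add: prob_dist_def)
qed

lemma L_log_bound_iff_softmax:
  fixes v :: "'y::finite \<Rightarrow> real"
  assumes "prob_dist q"
  shows "(\<forall>y. L_log q y + ereal (v y - ln (\<Sum>y\<in>UNIV. exp (v y))) \<le> 0)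
    \<longleftrightarrow> (\<forall>y. q y = exp (v y - ln (\<Sum>y\<in>UNIV. exp (v y))))"
  using assms prob_dist_eq_if_dominates[OF assms sum_exp_normalized]
  by (auto simp: add.commute[of "L_log q _"] L_log_le_neg_iff prob_dist_nonneg)

theorem corollary8:
  fixes Phi :: "'x::finite \<Rightarrow> 'y::finite \<Rightarrow> real^'m"
    and a b :: "real^'m" and xs :: "'x list"
  assumes "xs \<noteq> []"
  shows "(\<forall>\<mu> \<eta>. obj_ell L_log Phi a b xs \<mu> \<eta> = obj_log Phi a b xs \<mu> \<eta>) \<and>
    (\<forall>\<mu>s \<eta>s. solves_log Phi a b xs \<mu>s \<eta>s \<longrightarrow>
      (\<forall>h. class_rule h \<longrightarrow>
        ((\<forall>x y. loss_of L_log h x y + ereal (Phi x y \<bullet> \<mu>s + phi_ell L_log Phi \<mu>s x) \<le> 0)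
         \<longleftrightarrow>
         (\<forall>x y. h x y = exp (Phi x y \<bullet> \<mu>s + phi_log Phi \<mu>s x) \<and>
                h x y = inverse (\<Sum>i\<in>UNIV. exp ((Phi x i - Phi x y) \<bullet> \<mu>s))))))"
proof (intro conjI allI impI)
  show "obj_ell L_log Phi a b xs \<mu> \<eta> = obj_log Phi a b xs \<mu> \<eta>" for \<mu> \<eta>
    by (simp add: obj_ell_L_log)
next
  fix \<mu>s \<eta>s :: "real^'m" and h :: "'x \<Rightarrow> 'y \<Rightarrow> real"
  assume "class_rule h"
  then have "prob_dist (h x)" for x
    by (simp add: class_rule_def)
  then have softmax: "(\<forall>y. L_log (h x) y + ereal (v y - ln (\<Sum>y\<in>UNIV. exp (v y))) \<le> 0)
    \<longleftrightarrow> (\<forall>y. h x y = exp (v y - ln (\<Sum>y\<in>UNIV. exp (v y))))" for x v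
    by (rule L_log_bound_iff_softmax)
  show "(\<forall>x y. loss_of L_log h x y + ereal (Phi x y \<bullet> \<mu>s + phi_ell L_log Phi \<mu>s x) \<le> 0)
    \<longleftrightarrow> (\<forall>x y. h x y = exp (Phi x y \<bullet> \<mu>s + phi_log Phi \<mu>s x) \<and>
                h x y = inverse (\<Sum>i\<in>UNIV. exp ((Phi x i - Phi x y) \<bullet> \<mu>s)))"
    using softmax[of _ "\<lambda>y. Phi _ y \<bullet> \<mu>s"] exp_normalized_eq_inverse[of "\<lambda>y. Phi _ y \<bullet> \<mu>s"]
    by (simp add: loss_of_def phi_ell_L_log phi_log_def inner_diff_left)
qed

end
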